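(* Let $p=p(n)$ satisfy $n^{-\frac{e-2}{3e-2}+\varepsilon}\leq p=o(1)$ for some constant $\varepsilon>0$. For real $k$ define $$\gamma(k)= -\tfrac{1}{2}\ln (2\pi) +k\ln n + k - \tfrac{5}{2} \ln k + (k-1) \ln \frac{p}{1-p} - \binom{k}{2} \ln \frac{1}{1-p},\qquad \binom k2=\frac{k(k-1)}2 .$$ Then, for all sufficiently large $n$, the equation $\gamma(k)=0$ has a unique solution $\hat k=\hat k(n)$ with $1\ll \hat k = o(\sqrt n)$, and $$\hat{k}=2\log_{1/(1-p)}(enp)+ \frac{3\ln p}{2\ln(np)} + 3 + o(1).$$ Moreover, for integers $k$ with $1\ll k\ll\sqrt n$, one has $\mathbb{E}X_k=(1+o(1))e^{\gamma(k)}$.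
   Context: $G(n,p)$ is the binomial random graph on $[n]$ (each pair an edge independently with probability $p$). $X_k$ denotes the number of $k$-element subsets $U\subseteq[n]$ whose induced subgraph in $G(n,p)$ is a tree; thus $\mathbb{E}X_k=\binom nk k^{k-2}p^{k-1}(1-p)^{\binom k2-k+1}$. *)

theory Defs
  imports "HOL-Analysis.Analysis"
begin

text \<open>Expected number of k-subsets of [n] inducing a tree in G(n,p),
  given explicitly by the (Cayley) formula stated in the context:
  binom(n,k) k^(k-2) p^(k-1) (1-p)^(binom(k,2)-k+1).\<close>
definition EX_trees :: "nat \<Rightarrow> real \<Rightarrow> nat \<Rightarrow> real" where
  "EX_trees n p k = real (n choose k) * real k powr (real k - 2) * p ^ (k - 1)
      * (1 - p) powr (real (k choose 2) - real k + 1)"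

definition gam :: "nat \<Rightarrow> real \<Rightarrow> real \<Rightarrow> real" where
  "gam n p k = - ln (2 * pi) / 2 + k * ln (real n) + k - 5 / 2 * ln k
      + (k - 1) * ln (p / (1 - p)) - (k * (k - 1) / 2) * ln (1 / (1 - p))"

end

theory Submission
  imports Defs "HOL-Real_Asymp.Real_Asymp"
begin

(*
  Write a = ln (e n p) and q = ln (1 / (1 - p)).  Then
  gam k = k (a + q) - k (k - 1) q / 2 - 5/2 ln k - (ln p + q) - ln (2 pi) / 2
  is a concave quadratic in k perturbed by a logarithm: it is positive on
  [1, (a + q) / q + 1/2] and strictly decreasing beyond, so it has at most one root k >= 1.
  At k = 2 a / q + 3 + s + eta, with s = 3 ln p / (2 ln (n p)), the terms of order a cancel
  except - a eta, so gam k = - a eta + O (ln a).  As a tends to infinity, gam changes sign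
  between eta = delta and eta = - delta, which locates the root within delta of
  2 a / q + 3 + s.  The hypothesis on p is only used in the form p >= n^(-c) with c < 1/2,
  which makes this root o (sqrt n).

  The second claim is Stirling's formula ln k! = (k + 1/2) ln k - k + ln (2 pi) / 2 + o(1),
  whose constant is identified by Wallis' product, combined with
  n (n - 1) ... (n - k + 1) = (1 + o(1)) n^k for k = o (sqrt n).
*)

section \<open>Stirling's formula\<close>

definition stirling_error :: "nat \<Rightarrow> real" where
  "stirling_error n = ln (fact n) - (real n + 1/2) * ln (real n) + real n"

lemma stirling_error_Suc_diff:
  assumes "n \<ge> 1"
  shows "stirling_error (Suc n) - stirling_error n = 1 - (real n + 1/2) * ln (1 + 1 / real n)"
proof -
  have "1 + 1 / real n = (real n + 1) / real n"
    using assms by (simp add: field_simps)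
  then have ln_ratio: "ln (1 + 1 / real n) = ln (real n + 1) - ln (real n)"
    using assms by (simp add: ln_div)
  have ln_fact: "ln (fact (Suc n) :: real) = ln (fact n) + ln (real n + 1)"
    by (simp add: ln_mult add.commute)
  show ?thesis
    unfolding stirling_error_def ln_ratio ln_fact of_nat_Suc by (simp add: algebra_simps)
qed

lemma convergent_stirling_error: "convergent stirling_error"
proof -
  define d where "d n = stirling_error (Suc n) - stirling_error n" for n
  define e where "e n = real n ^ 2 * ((real n + 1/2) * ln (1 + 1 / real n) - 1)" for n
  have "e \<longlonglongrightarrow> 1/12"
    unfolding e_def by real_asymp
  then have "\<forall>\<^sub>F n in sequentially. 0 < e n \<and> e n < 1"
    by (intro eventually_conj order_tendstoD) auto
  then have "\<forall>\<^sub>F n in sequentially. norm (d n) \<le> inverse (real n ^ 2)"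
    using eventually_ge_at_top[of "1::nat"]
  proof eventually_elim
    case (elim n)
    then have "d n = - e n / real n ^ 2"
      by (simp add: d_def e_def stirling_error_Suc_diff)
    then have "norm (d n) = e n / real n ^ 2"
      using elim by simp
    also have "\<dots> \<le> 1 / real n ^ 2"
      using elim by (intro divide_right_mono) auto
    finally show ?case
      by (simp add: divide_inverse)
  qed
  then have "summable d"
    by (rule summable_comparison_test_ev) (use inverse_power_summable[of 2] in simp)
  then have "(\<lambda>n. stirling_error 0 + (\<Sum>i<n. d i)) \<longlonglongrightarrow> stirling_error 0 + suminf d"
    by (intro tendsto_add tendsto_const summable_LIMSEQ)
  then show ?thesis
    by (auto simp: d_def sum_lessThan_telescope convergent_def)
qed

lemma wallis_partial_product_eq:
  "(\<Prod>k=1..n. 4 * real k ^ 2 / (4 * real k ^ 2 - 1))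
     = 2 ^ (4 * n) * fact n ^ 4 / (fact (2 * n) ^ 2 * (2 * real n + 1))"
proof (induction n)
  case (Suc n)
  have step: "P * F ^ 4 / (G ^ 2 * (2 * m + 1)) * (4 * (m + 1) ^ 2 / (4 * (m + 1) ^ 2 - 1))
      = 16 * P * ((m + 1) * F) ^ 4 / (((2 * m + 2) * (2 * m + 1) * G) ^ 2 * (2 * m + 3))"
    if "G \<noteq> 0" "m \<ge> 0" for P F G m :: real
  proof -
    have "4 * (m + 1) ^ 2 - 1 = (2 * m + 1) * (2 * m + 3)"
      by (simp add: algebra_simps power2_eq_square)
    moreover have "2 * m + 1 \<noteq> 0" "2 * m + 3 \<noteq> 0" "2 * m + 2 \<noteq> 0"
      using that by auto
    ultimately show ?thesis
      using that by (simp add: frac_eq_eq) (simp add: algebra_simps power2_eq_square power4_eq_xxxx)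
  qed
  have "fact (2 * Suc n) = (2 * real n + 2) * (2 * real n + 1) * (fact (2 * n) :: real)"
    by (simp add: algebra_simps)
  then show ?case
    using Suc step[of "fact (2 * n)" "real n" "2 ^ (4 * n)" "fact n"]
    by (simp add: prod.nat_ivl_Suc' power_add algebra_simps)
qed simp

lemma ln_wallis_partial_product_eq:
  assumes "n \<ge> 1"
  shows "ln (\<Prod>k=1..n. 4 * real k ^ 2 / (4 * real k ^ 2 - 1))
    = 4 * stirling_error n - 2 * stirling_error (2 * n) - ln 2 - ln ((2 * real n + 1) / real n)"
proof -
  have "ln (\<Prod>k=1..n. 4 * real k ^ 2 / (4 * real k ^ 2 - 1))
      = real (4 * n) * ln 2 + 4 * ln (fact n) - 2 * ln (fact (2 * n)) - ln (2 * real n + 1)"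
    unfolding wallis_partial_product_eq using assms by (simp add: ln_mult ln_div ln_realpow)
  also have "ln (fact n) = stirling_error n + (real n + 1/2) * ln (real n) - real n"
    by (simp add: stirling_error_def)
  also have "ln (fact (2 * n)) = stirling_error (2 * n) + (2 * real n + 1/2) * (ln 2 + ln (real n)) - 2 * real n"
    using assms by (simp add: stirling_error_def ln_mult)
  also have "ln (2 * real n + 1) = ln ((2 * real n + 1) / real n) + ln (real n)"
    using assms by (simp add: ln_div)
  finally show ?thesis
    by (simp add: algebra_simps)
qed

lemma stirling_error_LIMSEQ: "stirling_error \<longlonglongrightarrow> ln (2 * pi) / 2"
proof -
  define W where "W n = (\<Prod>k=1..n. 4 * real k ^ 2 / (4 * real k ^ 2 - 1))" for n
  obtain C where C: "stirling_error \<longlonglongrightarrow> C"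
    using convergent_stirling_error by (auto simp: convergent_def)
  have C_even: "(\<lambda>n. stirling_error (2 * n)) \<longlonglongrightarrow> C"
    by (rule filterlim_compose[OF C]) (rule filterlim_subseq, simp add: strict_mono_def)
  have ln_ratio: "(\<lambda>n::nat. ln ((2 * real n + 1) / real n)) \<longlonglongrightarrow> ln 2"
    by real_asymp
  have lim: "(\<lambda>n. 4 * stirling_error n - 2 * stirling_error (2 * n) - ln 2
      - ln ((2 * real n + 1) / real n)) \<longlonglongrightarrow> 4 * C - 2 * C - ln 2 - ln 2"
    by (intro tendsto_intros C C_even ln_ratio)
  have "\<forall>\<^sub>F n in sequentially. 4 * stirling_error n - 2 * stirling_error (2 * n) - ln 2
      - ln ((2 * real n + 1) / real n) = ln (W n)"
    using eventually_ge_at_top[of "1::nat"]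
    unfolding W_def by eventually_elim (rule ln_wallis_partial_product_eq[symmetric])
  then have "(\<lambda>n. ln (W n)) \<longlonglongrightarrow> 4 * C - 2 * C - ln 2 - ln 2"
    by (rule Lim_transform_eventually[OF lim])
  moreover have "(\<lambda>n. ln (W n)) \<longlonglongrightarrow> ln (pi / 2)"
    unfolding W_def using wallis by (intro tendsto_intros) auto
  ultimately have "ln (pi / 2) = 4 * C - 2 * C - ln 2 - ln 2"
    using LIMSEQ_unique by blast
  moreover have "ln (2 * pi) = ln (pi / 2) + 2 * ln 2"
    by (simp add: ln_mult ln_div)
  ultimately show ?thesis
    using C by simp
qed

section \<open>The expected number of induced trees\<close>

lemma binomial_fact_div_power_eq:
  assumes "n > 0"
  shows "real (n choose k) * fact k / real n ^ k = (\<Prod>i<k. 1 - real i / real n)"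
proof -
  have "real (n choose k) * fact k = (\<Prod>i<k. real n - real i)"
    by (simp add: binomial_gbinomial gbinomial_mult_fact' lessThan_atLeast0)
  then show ?thesis
    using assms by (simp add: prod_dividef field_simps)
qed

lemma binomial_fact_div_power_bounds:
  assumes "k \<le> n" "n > 0"
  shows "1 - real k ^ 2 / real n \<le> real (n choose k) * fact k / real n ^ k"
    and "real (n choose k) * fact k / real n ^ k \<le> 1"
proof -
  have "(\<Prod>i<k. 1 - real k / real n) \<le> (\<Prod>i<k. 1 - real i / real n)"
    using assms by (intro prod_mono) (auto simp: field_simps)
  moreover have "1 + real k * (- (real k / real n)) \<le> (1 + (- (real k / real n))) ^ k"
    using assms by (intro Bernoulli_inequality) (auto simp: field_simps)
  ultimately show "1 - real k ^ 2 / real n \<le> real (n choose k) * fact k / real n ^ k"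
    using assms by (simp add: binomial_fact_div_power_eq power2_eq_square)
  have "(\<Prod>i<k. 1 - real i / real n) \<le> (\<Prod>i<k. 1)"
    using assms by (intro prod_mono) (auto simp: field_simps)
  then show "real (n choose k) * fact k / real n ^ k \<le> 1"
    using assms by (simp add: binomial_fact_div_power_eq)
qed

lemma eventually_le_of_div_sqrt_tendsto_0:
  assumes "(\<lambda>n. real (k n) / sqrt (real n)) \<longlonglongrightarrow> 0"
  shows "\<forall>\<^sub>F n in sequentially. k n \<le> n"
proof -
  have "\<forall>\<^sub>F n in sequentially. real (k n) / sqrt (real n) < 1"
    using order_tendstoD(2)[OF assms] by simp
  then show ?thesis
    using eventually_gt_at_top[of "0::nat"]
  proof eventually_elim
    case (elim n)
    then have "real (k n) < sqrt (real n)"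
      by (simp add: field_simps)
    then have "real (k n) ^ 2 < sqrt (real n) ^ 2"
      by (intro power_strict_mono) auto
    then have "k n * k n < n"
      by (simp add: power2_eq_square flip: of_nat_mult)
    then show ?case
      by (metis le_square le_trans less_imp_le)
  qed
qed

lemma binomial_fact_div_power_tendsto_1:
  assumes "(\<lambda>n. real (k n) / sqrt (real n)) \<longlonglongrightarrow> 0"
  shows "(\<lambda>n. real (n choose k n) * fact (k n) / real n ^ k n) \<longlonglongrightarrow> 1"
proof (rule tendsto_sandwich)
  have small: "\<forall>\<^sub>F n in sequentially. k n \<le> n \<and> n > 0"
    using eventually_le_of_div_sqrt_tendsto_0[OF assms] eventually_gt_at_top[of "0::nat"]
    by (rule eventually_conj)
  then show "\<forall>\<^sub>F n in sequentially. 1 - (real (k n) / sqrt (real n)) ^ 2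
      \<le> real (n choose k n) * fact (k n) / real n ^ k n"
    by eventually_elim (simp add: power_divide binomial_fact_div_power_bounds(1))
  show "\<forall>\<^sub>F n in sequentially. real (n choose k n) * fact (k n) / real n ^ k n \<le> 1"
    using small by eventually_elim (blast intro: binomial_fact_div_power_bounds(2))
  show "(\<lambda>n. 1 - (real (k n) / sqrt (real n)) ^ 2) \<longlonglongrightarrow> 1"
    using tendsto_diff[OF tendsto_const tendsto_power[OF assms, of 2], of 1] by simp
qed simp

lemma of_nat_choose_two: "real (k choose 2) = real k * (real k - 1) / 2"
proof (induction k)
  case (Suc k)
  have "Suc k choose 2 = k + (k choose 2)"
    by (simp add: numeral_2_eq_2)
  with Suc show ?case
    by (simp add: field_simps)
qed simp

lemma EX_trees_div_exp_gam:
  assumes "1 \<le> k" "k \<le> n" "0 < p" "p < 1"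
  shows "EX_trees n p k / exp (gam n p (real k))
    = real (n choose k) * fact k / real n ^ k * exp (ln (2 * pi) / 2 - stirling_error k)"
proof -
  define Q where "Q = real (n choose k) * fact k / real n ^ k"
  have choose_pos: "real (n choose k) > 0"
    using assms by simp
  then have "Q > 0" "EX_trees n p k > 0"
    using assms by (simp_all add: Q_def EX_trees_def)
  have ln_EX: "ln (EX_trees n p k) = ln (real (n choose k)) + (real k - 2) * ln (real k)
      + (real k - 1) * ln p + (real k * (real k - 1) / 2 - real k + 1) * ln (1 - p)"
    unfolding EX_trees_def using choose_pos assms
    by (simp add: ln_mult ln_powr ln_realpow of_nat_diff of_nat_choose_two)
  have ln_Q: "ln Q = ln (real (n choose k)) + ln (fact k) - real k * ln (real n)"
    unfolding Q_def using choose_pos assms by (simp add: ln_mult ln_div ln_realpow)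
  have ln_odds: "ln (p / (1 - p)) = ln p - ln (1 - p)" and ln_inv: "ln (1 / (1 - p)) = - ln (1 - p)"
    using assms by (simp_all add: ln_div)
  have ln_fact: "ln (fact k) = stirling_error k + (real k + 1/2) * ln (real k) - real k"
    by (simp add: stirling_error_def)
  have "ln (EX_trees n p k) - gam n p (real k) = ln Q + ln (2 * pi) / 2 - stirling_error k"
    unfolding ln_EX ln_Q gam_def ln_odds ln_inv ln_fact by (simp add: field_simps)
  moreover have "EX_trees n p k / exp (gam n p (real k)) = exp (ln (EX_trees n p k) - gam n p (real k))"
    using \<open>EX_trees n p k > 0\<close> by (simp add: exp_diff)
  ultimately have "EX_trees n p k / exp (gam n p (real k)) = exp (ln Q + ln (2 * pi) / 2 - stirling_error k)"
    by simp
  also have "\<dots> = Q * exp (ln (2 * pi) / 2 - stirling_error k)"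
    using \<open>Q > 0\<close> by (simp add: exp_add exp_diff)
  finally show ?thesis
    unfolding Q_def .
qed

lemma EX_trees_div_exp_gam_tendsto_1:
  fixes p :: "nat \<Rightarrow> real" and k :: "nat \<Rightarrow> nat"
  assumes "\<forall>\<^sub>F n in sequentially. 0 < p n \<and> p n < 1"
    and "filterlim k at_top sequentially"
    and "(\<lambda>n. real (k n) / sqrt (real n)) \<longlonglongrightarrow> 0"
  shows "(\<lambda>n. EX_trees n (p n) (k n) / exp (gam n (p n) (real (k n)))) \<longlonglongrightarrow> 1"
proof -
  have lim: "(\<lambda>n. real (n choose k n) * fact (k n) / real n ^ k n
      * exp (ln (2 * pi) / 2 - stirling_error (k n))) \<longlonglongrightarrow> 1 * exp (ln (2 * pi) / 2 - ln (2 * pi) / 2)"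
    by (intro tendsto_intros binomial_fact_div_power_tendsto_1 assms(3)
        filterlim_compose[OF stirling_error_LIMSEQ assms(2)])
  have "\<forall>\<^sub>F n in sequentially. 1 \<le> k n"
    using assms(2) by (simp add: filterlim_at_top)
  with eventually_le_of_div_sqrt_tendsto_0[OF assms(3)] assms(1)
  have "\<forall>\<^sub>F n in sequentially. real (n choose k n) * fact (k n) / real n ^ k n
      * exp (ln (2 * pi) / 2 - stirling_error (k n)) = EX_trees n (p n) (k n) / exp (gam n (p n) (real (k n)))"
    by eventually_elim (simp add: EX_trees_div_exp_gam)
  with lim show ?thesis
    by (simp add: Lim_transform_eventually)
qed

section \<open>The shape of gam\<close>

lemma ln_inv_one_minus_ge: "0 \<le> p \<Longrightarrow> p < 1 \<Longrightarrow> p \<le> ln (1 / (1 - p :: real))"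
  using ln_one_minus_pos_upper_bound[of p] by (simp add: ln_div)

lemma gam_altdef:
  fixes n :: nat and p k :: real
  defines "a \<equiv> ln (exp 1 * real n * p)" and "q \<equiv> ln (1 / (1 - p))"
  assumes "n > 0" "0 < p" "p < 1"
  shows "gam n p k = k * (a + q) - k * (k - 1) / 2 * q - 5/2 * ln k - (ln p + q) - ln (2 * pi) / 2"
proof -
  have "ln (p / (1 - p)) = ln p + q" "a = 1 + ln (real n) + ln p"
    using assms by (simp_all add: ln_div ln_mult)
  then show ?thesis
    unfolding gam_def q_def by (simp add: algebra_simps)
qed

lemma gam_pos_before_peak:
  fixes n :: nat and p k :: real
  defines "a \<equiv> ln (exp 1 * real n * p)" and "q \<equiv> ln (1 / (1 - p))"
  assumes np: "n > 0" "0 < p" "p < 1" and large: "5 \<le> a + q" and small: "ln p + q + ln (2 * pi) / 2 < 0"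
    and k: "1 \<le> k" "k \<le> (a + q) / q + 1/2"
  shows "0 < gam n p k"
proof -
  have "q > 0"
    using ln_inv_one_minus_ge[of p] np unfolding q_def by simp
  then have "(k - 1) * q \<le> a + q - q / 2"
    using k(2) by (simp add: field_simps)
  then have "k * (k - 1) / 2 * q \<le> k * (a + q) / 2"
    using k(1) \<open>q > 0\<close> mult_left_mono[of "(k - 1) * q" "a + q" k] by (simp add: algebra_simps)
  moreover have "5/2 * ln k \<le> k * (a + q) / 2"
    using ln_less_self[of k] mult_left_mono[of 5 "a + q" k] large k(1) by linarith
  ultimately show ?thesis
    using np small unfolding a_def q_def by (simp add: gam_altdef)
qed

lemma gam_strict_decreasing_after_peak:
  fixes n :: nat and p k1 k2 :: real
  defines "a \<equiv> ln (exp 1 * real n * p)" and "q \<equiv> ln (1 / (1 - p))"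
  assumes np: "n > 0" "0 < p" "p < 1" and k: "(a + q) / q + 1/2 \<le> k1" "k1 < k2" "1 \<le> k1"
  shows "gam n p k2 < gam n p k1"
proof -
  have "q > 0"
    using ln_inv_one_minus_ge[of p] np unfolding q_def by simp
  then have "a + q \<le> (k1 - 1/2) * q"
    using k(1) by (simp add: field_simps)
  moreover have "k1 * q < k2 * q"
    using k(2) \<open>q > 0\<close> by simp
  ultimately have "(k2 - k1) * (a + q - (k1 + k2 - 1) / 2 * q) < 0"
    using k(2) by (intro mult_pos_neg) (auto simp: field_simps)
  moreover have "ln k1 < ln k2"
    using k(2,3) by simp
  moreover have "gam n p k2 - gam n p k1
      = (k2 - k1) * (a + q - (k1 + k2 - 1) / 2 * q) - 5/2 * (ln k2 - ln k1)"
    using np unfolding a_def q_def by (simp add: gam_altdef field_simps)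
  ultimately show ?thesis
    by argo
qed

lemma gam_root_unique:
  fixes n :: nat and p k1 k2 :: real
  defines "a \<equiv> ln (exp 1 * real n * p)" and "q \<equiv> ln (1 / (1 - p))"
  assumes np: "n > 0" "0 < p" "p < 1" and large: "5 \<le> a + q" and small: "ln p + q + ln (2 * pi) / 2 < 0"
    and roots: "1 \<le> k1" "1 \<le> k2" "gam n p k1 = 0" "gam n p k2 = 0"
  shows "k1 = k2"
proof -
  have after_peak: "(a + q) / q + 1/2 \<le> k" if "1 \<le> k" "gam n p k = 0" for k
    using gam_pos_before_peak[of n p k] np large small that unfolding a_def q_def by force
  show ?thesis
  proof (cases k1 k2 rule: linorder_cases)
    case less
    then show ?thesis
      using gam_strict_decreasing_after_peak[of n p k1 k2] after_peak[of k1] np roots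
      unfolding a_def q_def by simp
  next
    case greater
    then show ?thesis
      using gam_strict_decreasing_after_peak[of n p k2 k1] after_peak[of k2] np roots
      unfolding a_def q_def by simp
  qed
qed

(* The correction s makes - a s cancel the 3/2 ln p coming from - 5/2 ln k. *)
lemma gam_shift_eq:
  fixes n :: nat and p s \<eta> k :: real
  defines "a \<equiv> ln (exp 1 * real n * p)" and "q \<equiv> ln (1 / (1 - p))"
  assumes np: "n > 0" "0 < p" "p < 1" and pos: "0 < a" "0 < k"
    and k: "k = 2 * a / q + 3 + s + \<eta>" and s: "(a - 1) * s = 3/2 * ln p"
  shows "gam n p k = - a * \<eta> - ((s + \<eta>) * (s + \<eta> + 3) / 2 + 1) * q - ln (2 * pi) / 2 - s
    - 5/2 * ln (k * p / a) - 5/2 * ln a"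
proof -
  have "q > 0"
    using ln_inv_one_minus_ge[of p] np unfolding q_def by simp
  have "gam n p k = k * (a + q) - k * (k - 1) / 2 * q - 5/2 * ln k - (ln p + q) - ln (2 * pi) / 2"
    using np unfolding a_def q_def by (rule gam_altdef)
  also have "k * (a + q) - k * (k - 1) / 2 * q = - a * \<eta> - a * s - (s + \<eta>) * (s + \<eta> + 3) / 2 * q"
    using \<open>q > 0\<close> unfolding k by (simp add: field_simps power2_eq_square)
  also have "ln k = ln (k * p / a) - ln p + ln a"
    using np pos by (simp add: ln_mult ln_div)
  also have "a * s = s + 3/2 * ln p"
    using s by (simp add: algebra_simps)
  finally show ?thesis
    by (simp add: algebra_simps)
qed

lemma isCont_gam: "0 < k \<Longrightarrow> isCont (gam n p) k"
  unfolding gam_def[abs_def] by (intro continuous_intros) auto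

section \<open>The root of gam\<close>

lemma bounded_mult_tendsto_0:
  fixes f g :: "'a \<Rightarrow> real"
  assumes "\<forall>\<^sub>F x in F. \<bar>f x\<bar> \<le> B" and "(g \<longlongrightarrow> 0) F"
  shows "((\<lambda>x. f x * g x) \<longlongrightarrow> 0) F"
proof (rule tendsto_0_le[OF assms(2)])
  show "\<forall>\<^sub>F x in F. norm (f x * g x) \<le> norm (g x) * B"
    using assms(1) by eventually_elim (simp add: abs_mult mult.commute mult_right_mono)
qed

locale sparse_regime =
  fixes p :: "nat \<Rightarrow> real" and c :: real
  assumes p_tendsto_0: "p \<longlonglongrightarrow> 0"
    and c_less_half: "c < 1/2"
    and p_lower: "\<forall>\<^sub>F n in sequentially. real n powr (- c) \<le> p n"
begin

definition ln_enp :: "nat \<Rightarrow> real" where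
  "ln_enp n = ln (exp 1 * real n * p n)"

definition ln_base :: "nat \<Rightarrow> real" where
  "ln_base n = ln (1 / (1 - p n))"

definition log_correction :: "nat \<Rightarrow> real" where
  "log_correction n = 3 * ln (p n) / (2 * ln (real n * p n))"

definition khat_approx :: "nat \<Rightarrow> real" where
  "khat_approx n = 2 * log (1 / (1 - p n)) (exp 1 * real n * p n) + log_correction n + 3"

lemma khat_approx_eq: "khat_approx n = 2 * ln_enp n / ln_base n + log_correction n + 3"
  by (simp add: khat_approx_def ln_enp_def ln_base_def log_def)

lemma eventually_p_bounds: "\<forall>\<^sub>F n in sequentially. 0 < p n \<and> p n \<le> 1/2"
proof -
  have "\<forall>\<^sub>F n in sequentially. p n < 1/2"
    using p_tendsto_0 by (rule order_tendstoD) simp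
  with p_lower eventually_gt_at_top[of "0::nat"] show ?thesis
    by eventually_elim (smt (verit) powr_gt_zero of_nat_0_less_iff)
qed

lemma eventually_ln_bounds:
  "\<forall>\<^sub>F n in sequentially. 0 < ln (real n) \<and> ln (real n) / 2 \<le> ln (real n * p n)
     \<and> - ln (p n) \<le> ln (real n) / 2"
  using p_lower eventually_p_bounds eventually_gt_at_top[of "1::nat"]
proof eventually_elim
  case (elim n)
  then have "- c * ln (real n) \<le> ln (p n)"
    using ln_le_cancel_iff[of "real n powr (- c)" "p n"] by (simp add: ln_powr)
  moreover have "c * ln (real n) \<le> 1/2 * ln (real n)"
    using c_less_half elim by (intro mult_right_mono) auto
  moreover have "ln (real n * p n) = ln (real n) + ln (p n)"
    using elim by (simp add: ln_mult)
  moreover have "0 < ln (real n)"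
    using elim by simp
  ultimately show ?case
    by linarith
qed

lemma eventually_ln_enp_eq: "\<forall>\<^sub>F n in sequentially. ln_enp n = 1 + ln (real n * p n)"
  using eventually_p_bounds eventually_gt_at_top[of "0::nat"]
  by eventually_elim (simp add: ln_enp_def ln_mult)

lemma ln_enp_at_top: "filterlim ln_enp at_top sequentially"
proof (rule filterlim_at_top_mono)
  show "filterlim (\<lambda>n::nat. 1 + ln (real n) / 2) at_top sequentially"
    by real_asymp
  show "\<forall>\<^sub>F n in sequentially. 1 + ln (real n) / 2 \<le> ln_enp n"
    using eventually_ln_enp_eq eventually_ln_bounds by eventually_elim simp
qed

lemma eventually_log_correction_bounds:
  "\<forall>\<^sub>F n in sequentially. - 3/2 \<le> log_correction n \<and> log_correction n \<le> 0"
  using eventually_ln_bounds eventually_p_bounds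
proof eventually_elim
  case (elim n)
  then have "ln (p n) < 0" "0 < ln (real n * p n)" "- ln (p n) \<le> ln (real n * p n)"
    by simp_all
  then show ?case
    by (simp add: log_correction_def field_simps)
qed

lemma ln_base_tendsto_0: "ln_base \<longlonglongrightarrow> 0"
proof -
  have "(\<lambda>n. ln (1 / (1 - p n))) \<longlonglongrightarrow> ln (1 / (1 - 0))"
    by (intro tendsto_intros p_tendsto_0) simp_all
  then show ?thesis
    by (simp add: ln_base_def[abs_def])
qed

lemma p_div_ln_base_tendsto_1: "(\<lambda>n. p n / ln_base n) \<longlonglongrightarrow> 1"
proof -
  have "filterlim p (at_right 0) sequentially"
    using eventually_p_bounds by (intro tendsto_imp_filterlim_at_right p_tendsto_0) (auto elim: eventually_mono)
  moreover have "((\<lambda>y::real. y / ln (1 / (1 - y))) \<longlongrightarrow> 1) (at_right 0)"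
    by real_asymp
  ultimately show ?thesis
    unfolding ln_base_def by (rule filterlim_compose[rotated])
qed

lemma eventually_ln_base_bounds: "\<forall>\<^sub>F n in sequentially. p n \<le> ln_base n \<and> ln_base n \<le> 1"
proof -
  have "\<forall>\<^sub>F n in sequentially. ln_base n < 1"
    using ln_base_tendsto_0 by (rule order_tendstoD) simp
  with eventually_p_bounds show ?thesis
    by eventually_elim (simp add: ln_base_def ln_inv_one_minus_ge)
qed

lemma eventually_khat_approx_bounds:
  "\<forall>\<^sub>F n in sequentially. 0 < ln_enp n \<and> 2 * ln_enp n + 3/2 \<le> khat_approx n
     \<and> khat_approx n \<le> 2 * ((1 + ln (real n)) * real n powr c) + 3"
  using eventually_ln_enp_eq eventually_ln_bounds eventually_p_bounds eventually_ln_base_bounds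
    eventually_log_correction_bounds p_lower
proof eventually_elim
  case (elim n)
  have "real n > 0"
    using elim by (cases n) auto
  have pos: "0 < ln_enp n" "0 < p n" "0 < ln_base n"
    using elim by auto
  have "ln_enp n / 1 \<le> ln_enp n / ln_base n"
    using elim pos by (intro divide_left_mono) auto
  then have "ln_enp n \<le> ln_enp n / ln_base n"
    by simp
  moreover have "ln_enp n / ln_base n \<le> ln_enp n * (1 / p n)"
    using elim pos by (simp add: divide_left_mono)
  moreover have "1 / p n \<le> 1 / real n powr (- c)"
    using elim pos \<open>real n > 0\<close> by (intro divide_left_mono) auto
  then have "1 / p n \<le> real n powr c"
    by (simp add: powr_minus_divide)
  then have "ln_enp n * (1 / p n) \<le> (1 + ln (real n)) * real n powr c"
    using elim pos \<open>real n > 0\<close> by (intro mult_mono) (auto simp: ln_mult)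
  moreover have "khat_approx n = 2 * (ln_enp n / ln_base n) + log_correction n + 3"
    by (simp add: khat_approx_eq)
  ultimately show ?case
    using elim pos by linarith
qed

lemma khat_approx_at_top: "filterlim khat_approx at_top sequentially"
  by (rule filterlim_at_top_mono[OF ln_enp_at_top])
    (use eventually_khat_approx_bounds in \<open>auto elim!: eventually_mono\<close>)

lemma khat_approx_div_sqrt_tendsto_0: "(\<lambda>n. khat_approx n / sqrt (real n)) \<longlonglongrightarrow> 0"
proof (rule tendsto_sandwich)
  show "\<forall>\<^sub>F n in sequentially. 0 \<le> khat_approx n / sqrt (real n)"
    using eventually_khat_approx_bounds by eventually_elim simp
  show "\<forall>\<^sub>F n in sequentially. khat_approx n / sqrt (real n)
      \<le> (2 * ((1 + ln (real n)) * real n powr c) + 3) / sqrt (real n)"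
    using eventually_khat_approx_bounds by eventually_elim (simp add: divide_right_mono)
  have "(\<lambda>n. (1 + ln (real n)) * real n powr c / sqrt (real n)) \<longlonglongrightarrow> 0"
    using c_less_half by real_asymp
  moreover have "(\<lambda>n. 1 / sqrt (real n)) \<longlonglongrightarrow> 0"
    by real_asymp
  ultimately have "(\<lambda>n. 2 * ((1 + ln (real n)) * real n powr c / sqrt (real n)) + 3 * (1 / sqrt (real n)))
      \<longlonglongrightarrow> 2 * 0 + 3 * 0"
    by (intro tendsto_intros)
  then show "(\<lambda>n. (2 * ((1 + ln (real n)) * real n powr c) + 3) / sqrt (real n)) \<longlonglongrightarrow> 0"
    by (simp add: add_divide_distrib)
qed simp

lemma eventually_gam_shift_eq:
  "\<forall>\<^sub>F n in sequentially. gam n (p n) (khat_approx n + \<eta>)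
     = - ln_enp n * \<eta> - ((log_correction n + \<eta>) * (log_correction n + \<eta> + 3) / 2 + 1) * ln_base n
       - ln (2 * pi) / 2 - log_correction n
       - 5/2 * ln ((khat_approx n + \<eta>) * p n / ln_enp n) - 5/2 * ln (ln_enp n)"
proof -
  have "\<forall>\<^sub>F n in sequentially. - \<eta> < khat_approx n"
    using khat_approx_at_top by (simp add: filterlim_at_top_dense)
  with eventually_ln_enp_eq eventually_ln_bounds eventually_p_bounds eventually_khat_approx_bounds
  show ?thesis
  proof eventually_elim
    case (elim n)
    have "n > 0"
      using elim by (cases n) auto
    moreover have "(ln_enp n - 1) * log_correction n = 3/2 * ln (p n)"
      using elim by (simp add: log_correction_def)
    ultimately show ?case
      using elim gam_shift_eq[of n "p n" "khat_approx n + \<eta>" "log_correction n" \<eta>]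
      by (simp add: khat_approx_eq ln_enp_def ln_base_def)
  qed
qed

lemma eventually_abs_log_correction_le: "\<forall>\<^sub>F n in sequentially. \<bar>log_correction n + t\<bar> \<le> 3/2 + \<bar>t\<bar>"
  using eventually_log_correction_bounds by eventually_elim linarith

lemma khat_approx_shift_mult_p_div_ln_enp_tendsto:
  "(\<lambda>n. (khat_approx n + \<eta>) * p n / ln_enp n) \<longlonglongrightarrow> 2"
proof -
  have inv: "(\<lambda>n. inverse (ln_enp n)) \<longlonglongrightarrow> 0"
    by (rule tendsto_inverse_0_at_top[OF ln_enp_at_top])
  have "(\<lambda>n. (log_correction n + (3 + \<eta>)) * (p n * inverse (ln_enp n))) \<longlonglongrightarrow> 0"
    using eventually_abs_log_correction_le
    by (rule bounded_mult_tendsto_0) (use tendsto_mult[OF p_tendsto_0 inv] in simp)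
  then have "(\<lambda>n. 2 * (p n / ln_base n) + (log_correction n + (3 + \<eta>)) * (p n * inverse (ln_enp n)))
      \<longlonglongrightarrow> 2 * 1 + 0"
    by (intro tendsto_intros p_div_ln_base_tendsto_1)
  moreover have "\<forall>\<^sub>F n in sequentially.
      2 * (p n / ln_base n) + (log_correction n + (3 + \<eta>)) * (p n * inverse (ln_enp n))
      = (khat_approx n + \<eta>) * p n / ln_enp n"
    using eventually_ln_base_bounds eventually_khat_approx_bounds eventually_p_bounds
    by eventually_elim (simp add: khat_approx_eq field_simps)
  ultimately show ?thesis
    by (simp add: Lim_transform_eventually)
qed

lemma eventually_shift_coefficient_bound:
  "\<forall>\<^sub>F n in sequentially. \<bar>(log_correction n + \<eta>) * (log_correction n + \<eta> + 3) / 2 + 1\<bar>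
     \<le> (3/2 + \<bar>\<eta>\<bar>) * (3/2 + \<bar>\<eta>\<bar> + 3) / 2 + 1"
  using eventually_abs_log_correction_le[of \<eta>]
proof eventually_elim
  case (elim n)
  moreover have "\<bar>log_correction n + \<eta> + 3\<bar> \<le> 3/2 + \<bar>\<eta>\<bar> + 3"
    using elim abs_triangle_ineq[of "log_correction n + \<eta>" 3] by simp
  ultimately have "\<bar>(log_correction n + \<eta>) * (log_correction n + \<eta> + 3)\<bar>
      \<le> (3/2 + \<bar>\<eta>\<bar>) * (3/2 + \<bar>\<eta>\<bar> + 3)"
    unfolding abs_mult by (intro mult_mono) auto
  then show ?case
    by linarith
qed

lemma gam_khat_approx_shift_tendsto:
  "(\<lambda>n. gam n (p n) (khat_approx n + \<eta>) / ln_enp n) \<longlonglongrightarrow> - \<eta>"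
proof -
  define R where "R n = (log_correction n + \<eta>) * (log_correction n + \<eta> + 3) / 2 + 1" for n
  define X where "X n = R n * ln_base n + ln (2 * pi) / 2 + log_correction n
    + 5/2 * ln ((khat_approx n + \<eta>) * p n / ln_enp n) + 5/2 * ln (ln_enp n)" for n
  have inv: "(\<lambda>n. inverse (ln_enp n)) \<longlonglongrightarrow> 0"
    by (rule tendsto_inverse_0_at_top[OF ln_enp_at_top])
  have "\<forall>\<^sub>F n in sequentially. \<bar>R n\<bar> \<le> (3/2 + \<bar>\<eta>\<bar>) * (3/2 + \<bar>\<eta>\<bar> + 3) / 2 + 1"
    unfolding R_def by (rule eventually_shift_coefficient_bound)
  then have R_lim: "(\<lambda>n. R n * (ln_base n * inverse (ln_enp n))) \<longlonglongrightarrow> 0"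
    by (rule bounded_mult_tendsto_0) (use tendsto_mult[OF ln_base_tendsto_0 inv] in simp)
  have "\<forall>\<^sub>F n in sequentially. \<bar>log_correction n\<bar> \<le> 3/2"
    using eventually_abs_log_correction_le[of 0] by simp
  then have s_lim: "(\<lambda>n. log_correction n * inverse (ln_enp n)) \<longlonglongrightarrow> 0"
    using inv by (rule bounded_mult_tendsto_0)
  have ln_lim: "(\<lambda>n. ln (ln_enp n) / ln_enp n) \<longlonglongrightarrow> 0"
    by (rule filterlim_compose[OF _ ln_enp_at_top]) real_asymp
  have k_lim: "(\<lambda>n. ln ((khat_approx n + \<eta>) * p n / ln_enp n)) \<longlonglongrightarrow> ln 2"
    by (intro tendsto_intros khat_approx_shift_mult_p_div_ln_enp_tendsto) simp
  have "(\<lambda>n. R n * (ln_base n * inverse (ln_enp n)) + ln (2 * pi) / 2 * inverse (ln_enp n)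
      + log_correction n * inverse (ln_enp n)
      + 5/2 * (ln ((khat_approx n + \<eta>) * p n / ln_enp n) * inverse (ln_enp n))
      + 5/2 * (ln (ln_enp n) / ln_enp n))
      \<longlonglongrightarrow> 0 + ln (2 * pi) / 2 * 0 + 0 + 5/2 * (ln 2 * 0) + 5/2 * 0"
    by (intro tendsto_intros inv R_lim s_lim ln_lim k_lim)
  moreover have "X n / ln_enp n = R n * (ln_base n * inverse (ln_enp n)) + ln (2 * pi) / 2 * inverse (ln_enp n)
      + log_correction n * inverse (ln_enp n)
      + 5/2 * (ln ((khat_approx n + \<eta>) * p n / ln_enp n) * inverse (ln_enp n))
      + 5/2 * (ln (ln_enp n) / ln_enp n)" for n
    unfolding X_def divide_inverse by (simp add: distrib_right mult.assoc)
  ultimately have "(\<lambda>n. X n / ln_enp n) \<longlonglongrightarrow> 0"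
    by simp
  then have "(\<lambda>n. - \<eta> - X n / ln_enp n) \<longlonglongrightarrow> - \<eta> - 0"
    by (intro tendsto_intros)
  moreover have "\<forall>\<^sub>F n in sequentially. - \<eta> - X n / ln_enp n = gam n (p n) (khat_approx n + \<eta>) / ln_enp n"
    using eventually_gam_shift_eq[of \<eta>] eventually_khat_approx_bounds
  proof eventually_elim
    case (elim n)
    then have "gam n (p n) (khat_approx n + \<eta>) = - ln_enp n * \<eta> - X n"
      by (simp add: R_def X_def)
    with elim show ?case
      by (simp add: field_simps)
  qed
  ultimately show ?thesis
    by (simp add: Lim_transform_eventually)
qed

lemma eventually_gam_root_unique:
  "\<forall>\<^sub>F n in sequentially. \<forall>k1 k2. 1 \<le> k1 \<longrightarrow> 1 \<le> k2
     \<longrightarrow> gam n (p n) k1 = 0 \<longrightarrow> gam n (p n) k2 = 0 \<longrightarrow> k1 = k2"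
proof -
  have "filterlim p (at_right 0) sequentially"
    using eventually_p_bounds by (intro tendsto_imp_filterlim_at_right p_tendsto_0) (auto elim: eventually_mono)
  then have "filterlim (\<lambda>n. ln (p n)) at_bot sequentially"
    by (rule filterlim_compose[OF ln_at_0])
  then have "\<forall>\<^sub>F n in sequentially. ln (p n) < - 1 - ln (2 * pi) / 2"
    by (simp add: filterlim_at_bot_dense)
  moreover have "\<forall>\<^sub>F n in sequentially. 5 \<le> ln_enp n"
    using ln_enp_at_top by (simp add: filterlim_at_top)
  ultimately show ?thesis
    using eventually_p_bounds eventually_ln_base_bounds eventually_gt_at_top[of "0::nat"]
  proof eventually_elim
    case (elim n)
    then show ?case
      using gam_root_unique[of n "p n"] by (force simp: ln_enp_def ln_base_def)
  qed
qed

(* Arbitrary for the finitely many n at which gam n (p n) has no root >= 1. *)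
definition khat :: "nat \<Rightarrow> real" where
  "khat n = (SOME r. 1 \<le> r \<and> gam n (p n) r = 0)"

lemma eventually_khat_near:
  assumes "\<delta> > 0"
  shows "\<forall>\<^sub>F n in sequentially. 1 \<le> khat n \<and> gam n (p n) (khat n) = 0 \<and> \<bar>khat n - khat_approx n\<bar> \<le> \<delta>"
proof -
  have "\<forall>\<^sub>F n in sequentially. gam n (p n) (khat_approx n + \<delta>) / ln_enp n < 0"
    using gam_khat_approx_shift_tendsto[of \<delta>] by (rule order_tendstoD) (use assms in simp)
  moreover have "\<forall>\<^sub>F n in sequentially. 0 < gam n (p n) (khat_approx n + - \<delta>) / ln_enp n"
    using gam_khat_approx_shift_tendsto[of "- \<delta>"] by (rule order_tendstoD) (use assms in simp)
  moreover have "\<forall>\<^sub>F n in sequentially. 1 + \<delta> \<le> khat_approx n"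
    using khat_approx_at_top by (simp add: filterlim_at_top)
  ultimately show ?thesis
    using eventually_khat_approx_bounds eventually_gam_root_unique
  proof eventually_elim
    case (elim n)
    then have "gam n (p n) (khat_approx n + \<delta>) \<le> 0" "0 \<le> gam n (p n) (khat_approx n - \<delta>)"
      by (auto simp: divide_less_0_iff zero_less_divide_iff)
    then obtain r where r: "khat_approx n - \<delta> \<le> r" "r \<le> khat_approx n + \<delta>" "gam n (p n) r = 0"
      using IVT2[of "gam n (p n)" "khat_approx n + \<delta>" 0 "khat_approx n - \<delta>"] elim(3) assms isCont_gam
      by auto
    moreover have "1 \<le> r"
      using r elim(3) by linarith
    ultimately have "\<exists>r. 1 \<le> r \<and> gam n (p n) r = 0"
      by blast
    then have khat: "1 \<le> khat n \<and> gam n (p n) (khat n) = 0"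
      unfolding khat_def by (rule someI_ex)
    then have "khat n = r"
      using elim(5) r \<open>1 \<le> r\<close> by blast
    with khat r show ?case
      by auto
  qed
qed

lemma khat_minus_khat_approx_tendsto_0: "(\<lambda>n. khat n - khat_approx n) \<longlonglongrightarrow> 0"
proof (rule tendstoI)
  fix e :: real
  assume "e > 0"
  then show "\<forall>\<^sub>F n in sequentially. dist (khat n - khat_approx n) 0 < e"
    using eventually_khat_near[of "e / 2"] by (auto elim!: eventually_mono)
qed

lemma eventually_gam_khat: "\<forall>\<^sub>F n in sequentially. gam n (p n) (khat n) = 0"
  using eventually_khat_near[OF zero_less_one] by (auto elim: eventually_mono)

lemma khat_at_top: "filterlim khat at_top sequentially"
  using filterlim_tendsto_add_at_top[OF khat_minus_khat_approx_tendsto_0 khat_approx_at_top] by simp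

lemma khat_div_sqrt_tendsto_0: "(\<lambda>n. khat n / sqrt (real n)) \<longlonglongrightarrow> 0"
proof -
  have "(\<lambda>n. khat_approx n / sqrt (real n) + (khat n - khat_approx n) * (1 / sqrt (real n)))
      \<longlonglongrightarrow> 0 + 0 * 0"
    by (intro tendsto_intros khat_approx_div_sqrt_tendsto_0 khat_minus_khat_approx_tendsto_0) real_asymp
  then show ?thesis
    by (simp add: add_divide_distrib[symmetric])
qed

lemma eventually_eq_khat:
  assumes "filterlim k at_top sequentially" "\<forall>\<^sub>F n in sequentially. gam n (p n) (k n) = 0"
  shows "\<forall>\<^sub>F n in sequentially. k n = khat n"
proof -
  have "\<forall>\<^sub>F n in sequentially. 1 \<le> k n"
    using assms(1) by (simp add: filterlim_at_top)
  moreover note assms(2) eventually_khat_near[OF zero_less_one] eventually_gam_root_unique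
  ultimately show ?thesis
    by eventually_elim blast
qed

end

theorem mainTheorem2:
  fixes p :: "nat \<Rightarrow> real" and \<epsilon> :: real
  assumes eps: "\<epsilon> > 0"
    and lower: "\<forall>\<^sub>F n in sequentially.
                  real n powr (- (exp 1 - 2) / (3 * exp 1 - 2) + \<epsilon>) \<le> p n"
    and p0: "p \<longlonglongrightarrow> 0"
  shows "(\<exists>khat :: nat \<Rightarrow> real.
           filterlim khat at_top sequentially
         \<and> (\<lambda>n. khat n / sqrt (real n)) \<longlonglongrightarrow> 0
         \<and> (\<forall>\<^sub>F n in sequentially. gam n (p n) (khat n) = 0)
         \<and> (\<forall>k' :: nat \<Rightarrow> real. filterlim k' at_top sequentially
               \<longrightarrow> (\<lambda>n. k' n / sqrt (real n)) \<longlonglongrightarrow> 0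
               \<longrightarrow> (\<forall>\<^sub>F n in sequentially. gam n (p n) (k' n) = 0)
               \<longrightarrow> (\<forall>\<^sub>F n in sequentially. k' n = khat n))
         \<and> (\<lambda>n. khat n - (2 * log (1 / (1 - p n)) (exp 1 * real n * p n)
                  + 3 * ln (p n) / (2 * ln (real n * p n)) + 3)) \<longlonglongrightarrow> 0)
       \<and> (\<forall>k :: nat \<Rightarrow> nat. filterlim k at_top sequentially
           \<longrightarrow> (\<lambda>n. real (k n) / sqrt (real n)) \<longlonglongrightarrow> 0
           \<longrightarrow> (\<lambda>n. EX_trees n (p n) (k n) / exp (gam n (p n) (real (k n)))) \<longlonglongrightarrow> 1)"
proof -
  have "0 < 3 * exp 1 - (2::real)"
    using exp_gt_one[of 1] by linarith
  then have "(exp 1 - 2) / (3 * exp 1 - 2) < (1/2 :: real)"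
    by (simp add: field_simps)
  then have "(exp 1 - 2) / (3 * exp 1 - 2) - \<epsilon> < 1/2"
    using eps by linarith
  moreover have "- ((exp 1 - 2) / (3 * exp 1 - 2) - \<epsilon>) = - (exp 1 - 2) / (3 * exp 1 - 2) + \<epsilon>"
    by (simp add: minus_divide_left)
  ultimately interpret sparse_regime p "(exp 1 - 2) / (3 * exp 1 - 2) - \<epsilon>"
    using p0 lower by unfold_locales (simp_all only:)
  have "\<forall>\<^sub>F n in sequentially. 0 < p n \<and> p n < 1"
    using eventually_p_bounds by (auto elim: eventually_mono)
  moreover have "(\<lambda>n. khat n - (2 * log (1 / (1 - p n)) (exp 1 * real n * p n)
      + 3 * ln (p n) / (2 * ln (real n * p n)) + 3)) \<longlonglongrightarrow> 0"
    using khat_minus_khat_approx_tendsto_0 by (simp add: khat_approx_def log_correction_def)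
  ultimately show ?thesis
    using khat_at_top khat_div_sqrt_tendsto_0 eventually_gam_khat eventually_eq_khat
      EX_trees_div_exp_gam_tendsto_1 by blast
qed

end
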